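(* Let $n\ge 2$, $q=e^{2\pi i/6}$, and let $\varphi:\mathcal{H}_n(q)\to Q_n$ be the algebra homomorphism with $\varphi(g_i)=s_i$. Then the functional $a\mapsto \mathrm{Tr}(\varphi(a))$ on $\mathcal{H}_n(q)$ equals the Markov trace $\mathrm{tr}$ with parameter $\eta=1/2$; in particular $\mathrm{Tr}(f_{n-1})=1/2$ where $f_{n-1}=\varphi(e_{n-1})=(q-s_{n-1})/(1+q)$, and $\mathrm{Tr}(f_{n-1}b)=\mathrm{Tr}(f_{n-1})\mathrm{Tr}(b)$ for all $b$ in the subalgebra generated by $u_1,v_1,\dots,u_{n-2},v_{n-2}$.
   Context: $Q_n$ is the $\mathbb{C}$-algebra with generators $u_1,v_1,\dots,u_{n-1},v_{n-1}$ and relations (G1) $u_i^2=v_i^2=-1$; (G2) $[u_i,v_j]=-1$ if $|i-j|\le1$; (G3) $[u_i,v_j]=1$ if $|i-j|\ge2$; (G4) $[u_i,u_j]=[v_i,v_j]=1$, with $[a,b]=aba^{-1}b^{-1}$. Every word in the generators equals $\pm$ a unique basis word $u_1^{\epsilon_1}\cdots u_{n-1}^{\epsilon_{n-1}}v_1^{\nu_1}\cdots v_{n-1}^{\nu_{n-1}}$ ($\epsilon_i,\nu_i\in\{0,1\}$); $\mathrm{Tr}$ is the linear functional with $\mathrm{Tr}(1)=1$ and $\mathrm{Tr}(w)=0$ for non-identity basis words $w$. $s_i=\frac{-1}{2q}(1+u_i+v_i+u_iv_i)$; these satisfy the braid relations and $(s_i-q)(s_i+1)=0$, so $\varphi$ is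 well defined. The Hecke algebra $\mathcal{H}_n(q)$ has generators $g_1,\dots,g_{n-1}$ with relations $g_ig_{i+1}g_i=g_{i+1}g_ig_{i+1}$, $g_ig_j=g_jg_i$ ($|i-j|>1$), $(g_i+1)(g_i-q)=0$; $e_i=(q-g_i)/(1+q)$. The Markov trace with parameter $\eta$ is the unique linear functional $\mathrm{tr}$ on $\bigcup_n\mathcal{H}_n(q)$ with $\mathrm{tr}(1)=1$, $\mathrm{tr}(ab)=\mathrm{tr}(ba)$, $\mathrm{tr}(xe_n)=\eta\,\mathrm{tr}(x)$ for $x\in\mathcal{H}_n(q)$. *)

theory Defs
  imports Complex_Main
begin

text \<open>A basis word u_1^e_1 ... u_(n-1)^e_(n-1) v_1^v_1 ... v_(n-1)^v_(n-1) is encoded by the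
pair (E, N) of index sets E = {i. e_i = 1}, N = {i. v_i = 1}, both subsets of {1..<n}.
An element of Q_n is a complex-valued function on such pairs (its coordinates in the basis).\<close>

type_synonym qelem = "nat set \<times> nat set \<Rightarrow> complex"

definition qbasis :: "nat \<Rightarrow> (nat set \<times> nat set) set" where
  "qbasis n = Pow {1..<n} \<times> Pow {1..<n}"

text \<open>Sign exponent arising from the relations (G1)-(G4) when multiplying
u^E v^N by u^E' v^N': moving u_i (i in E') left past v_j (j in N) gives a factor -1 iff
abs(i-j) <= 1; u_i^2 = v_i^2 = -1 gives a factor -1 for each common index.\<close>
definition qsign_exp :: "nat set \<times> nat set \<Rightarrow> nat set \<times> nat set \<Rightarrow> nat" where
  "qsign_exp p p' = card {(i, j). i \<in> fst p' \<and> j \<in> snd p \<and> i \<le> j + 1 \<and> j \<le> i + 1}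
     + card (fst p \<inter> fst p') + card (snd p \<inter> snd p')"

definition symd :: "'a set \<Rightarrow> 'a set \<Rightarrow> 'a set" where
  "symd A B = (A - B) \<union> (B - A)"

definition qmult :: "nat \<Rightarrow> qelem \<Rightarrow> qelem \<Rightarrow> qelem" where
  "qmult n x y = (\<lambda>c. \<Sum>p\<in>qbasis n. \<Sum>p'\<in>qbasis n.
      if (symd (fst p) (fst p'), symd (snd p) (snd p')) = c
      then (-1) ^ qsign_exp p p' * x p * y p' else 0)"

definition qbw :: "nat set \<Rightarrow> nat set \<Rightarrow> qelem" where
  "qbw E N = (\<lambda>c. if c = (E, N) then 1 else 0)"

definition qone :: qelem where "qone = qbw {} {}"
definition qu :: "nat \<Rightarrow> qelem" where "qu i = qbw {i} {}"
definition qv :: "nat \<Rightarrow> qelem" where "qv i = qbw {} {i}"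

definition qadd :: "qelem \<Rightarrow> qelem \<Rightarrow> qelem" where "qadd x y = (\<lambda>c. x c + y c)"
definition qscale :: "complex \<Rightarrow> qelem \<Rightarrow> qelem" where "qscale a x = (\<lambda>c. a * x c)"

definition Tr :: "qelem \<Rightarrow> complex" where "Tr x = x ({}, {})"

definition qs :: "complex \<Rightarrow> nat \<Rightarrow> nat \<Rightarrow> qelem" where
  "qs q n i = qscale (-1 / (2 * q))
     (qadd (qadd qone (qu i)) (qadd (qv i) (qmult n (qu i) (qv i))))"

definition qphi :: "complex \<Rightarrow> nat \<Rightarrow> nat list \<Rightarrow> qelem" where
  "qphi q n w = foldr (\<lambda>i acc. qmult n (qs q n i) acc) w qone"

definition qf :: "complex \<Rightarrow> nat \<Rightarrow> nat \<Rightarrow> qelem" where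
  "qf q n i = qscale (1 / (1 + q)) (qadd (qscale q qone) (qscale (-1) (qs q n i)))"

inductive_set qsubalg :: "nat \<Rightarrow> nat \<Rightarrow> qelem set" for n k where
  one: "qone \<in> qsubalg n k"
| genu: "1 \<le> i \<Longrightarrow> i < k \<Longrightarrow> qu i \<in> qsubalg n k"
| genv: "1 \<le> i \<Longrightarrow> i < k \<Longrightarrow> qv i \<in> qsubalg n k"
| add: "x \<in> qsubalg n k \<Longrightarrow> y \<in> qsubalg n k \<Longrightarrow> qadd x y \<in> qsubalg n k"
| scale: "x \<in> qsubalg n k \<Longrightarrow> qscale a x \<in> qsubalg n k"
| mult: "x \<in> qsubalg n k \<Longrightarrow> y \<in> qsubalg n k \<Longrightarrow> qmult n x y \<in> qsubalg n k"

text \<open>A word [i_1,...,i_k] (all i_j >= 1) stands for g_(i_1) ... g_(i_k) in the union of the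
Hecke algebras. Linear functionals on the free algebra are given by their values on words;
such a functional descends to the Hecke algebra iff it vanishes on a r b for all words a, b
and all defining relations r.\<close>

definition posw :: "nat list \<Rightarrow> bool" where "posw w \<longleftrightarrow> (\<forall>i\<in>set w. 1 \<le> i)"

definition hecke_functional :: "complex \<Rightarrow> (nat list \<Rightarrow> complex) \<Rightarrow> bool" where
  "hecke_functional q \<tau> \<longleftrightarrow> (\<forall>a b i j. posw a \<and> posw b \<and> 1 \<le> i \<and> 1 \<le> j \<longrightarrow>
      \<tau> (a @ [i, Suc i, i] @ b) = \<tau> (a @ [Suc i, i, Suc i] @ b) \<and>
      (Suc i < j \<longrightarrow> \<tau> (a @ [i, j] @ b) = \<tau> (a @ [j, i] @ b)) \<and>
      \<tau> (a @ [i, i] @ b) = (q - 1) * \<tau> (a @ [i] @ b) + q * \<tau> (a @ b))"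

text \<open>Markov trace with parameter eta: tr(1)=1, tr(ab)=tr(ba), tr(x e_n) = eta tr(x) for
x in H_n (words in g_1..g_(n-1)), where e_n = (q - g_n)/(1+q); by linearity it suffices to
impose these on words.\<close>
definition markov_trace :: "complex \<Rightarrow> complex \<Rightarrow> (nat list \<Rightarrow> complex) \<Rightarrow> bool" where
  "markov_trace q \<eta> \<tau> \<longleftrightarrow> hecke_functional q \<tau> \<and> \<tau> [] = 1 \<and>
     (\<forall>a b. posw a \<and> posw b \<longrightarrow> \<tau> (a @ b) = \<tau> (b @ a)) \<and>
     (\<forall>n x. 1 \<le> n \<and> set x \<subseteq> {1..<n} \<longrightarrow>
        (q * \<tau> x - \<tau> (x @ [n])) / (1 + q) = \<eta> * \<tau> x)"

definition q6 :: complex where "q6 = exp (2 * of_real pi * \<i> / 6)"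

end

theory Submission
  imports Defs
begin

(* Q_n is a twisted group algebra of (Z/2)^(2(n-1)): basis words multiply by
   symmetric difference of their index sets, up to a sign (-1)^sigma where sigma is
   bilinear mod 2.  Bilinearity makes the sign a 2-cocycle, so the product is associative,
   and Tr (the identity coefficient) is a trace.  Checking the relations of s_i only involves
   two indices, which reduces them to finite computations in a 16-dimensional local model;
   the quadratic relation needs q^2 = q - 1, true for q = exp(2 pi i/6).  Hence Tr o phi is a
   trace on H_n(q).  If x involves only u_m, v_m and y only generators below m, then
   Tr(xy) = x(1) Tr(y); this yields the Markov property Tr(phi(x g_m)) = -1/(2q) Tr(phi x),
   the value Tr(f_(n-1)) = 1/2 and the factorization on the subalgebra.  Finally, a trace on
   H_n(q) with the Markov property is unique: by induction on m, using that H_(m+1) is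
   spanned by H_m and H_m g_m H_m, the difference of two such traces vanishes.  Since
   -1/(2q) = q - (1 + q)/2 for q = q6, Tr o phi coincides with the Markov trace for eta = 1/2. *)

section \<open>Twisted group algebra structure of Q_n\<close>

definition psymd :: "nat set \<times> nat set \<Rightarrow> nat set \<times> nat set \<Rightarrow> nat set \<times> nat set" where
  "psymd p p' = (symd (fst p) (fst p'), symd (snd p) (snd p'))"

lemma finite_qbasis [simp]: "finite (qbasis n)"
  unfolding qbasis_def by simp

lemma empty_in_qbasis [simp]: "({}, {}) \<in> qbasis n"
  unfolding qbasis_def by simp

lemma qbasis_finite: "p \<in> qbasis n \<Longrightarrow> finite (fst p) \<and> finite (snd p)"
proof -
  assume "p \<in> qbasis n"
  then have "fst p \<subseteq> {1..<n}" "snd p \<subseteq> {1..<n}" unfolding qbasis_def by (auto simp: mem_Times_iff)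
  then show ?thesis by (meson finite_subset finite_atLeastLessThan)
qed

lemma psymd_psymd [simp]: "psymd p (psymd p c) = c"
  unfolding psymd_def symd_def by (cases p; cases c) auto

lemma psymd_eq_iff: "psymd p p' = c \<longleftrightarrow> p' = psymd p c"
  by (metis psymd_psymd)

lemma psymd_empty [simp]: "psymd p ({}, {}) = p" "psymd ({}, {}) p = p"
  unfolding psymd_def symd_def by (cases p; simp)+

lemma psymd_assoc: "psymd (psymd p r) (psymd p c) = psymd r c"
  unfolding psymd_def symd_def by auto

lemma psymd_qbasis: "p \<in> qbasis n \<Longrightarrow> c \<in> qbasis n \<Longrightarrow> psymd p c \<in> qbasis n"
  unfolding psymd_def qbasis_def symd_def by auto

lemma psymd_qbasis_iff: "p \<in> qbasis n \<Longrightarrow> psymd p c \<in> qbasis n \<longleftrightarrow> c \<in> qbasis n"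
  by (metis psymd_qbasis psymd_psymd)

definition qsgn :: "nat set \<times> nat set \<Rightarrow> nat set \<times> nat set \<Rightarrow> complex" where
  "qsgn p p' = (-1) ^ qsign_exp p p'"

lemma qmult_alt: "qmult n x y c = (if c \<in> qbasis n then
    (\<Sum>p\<in>qbasis n. qsgn p (psymd p c) * x p * y (psymd p c)) else 0)"
proof -
  have inner: "(\<Sum>p'\<in>qbasis n. if psymd p p' = c then qsgn p p' * x p * y p' else 0)
      = (if c \<in> qbasis n then qsgn p (psymd p c) * x p * y (psymd p c) else 0)"
    if "p \<in> qbasis n" for p
    using psymd_qbasis_iff[OF that, of c] by (simp add: psymd_eq_iff sum.delta')
  have "qmult n x y c = (\<Sum>p\<in>qbasis n. \<Sum>p'\<in>qbasis n.
      if psymd p p' = c then qsgn p p' * x p * y p' else 0)"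
    unfolding qmult_def psymd_def qsgn_def by simp
  also have "\<dots> = (\<Sum>p\<in>qbasis n. if c \<in> qbasis n then qsgn p (psymd p c) * x p * y (psymd p c) else 0)"
    by (rule sum.cong) (auto simp: inner)
  finally show ?thesis by simp
qed

definition par :: "'a set \<Rightarrow> complex" where
  "par X = (-1) ^ card X"

lemma par_symd:
  assumes "finite X" "finite Y"
  shows "par (symd X Y) = par X * par Y"
proof -
  have "symd X Y = (X \<union> Y) - (X \<inter> Y)" unfolding symd_def by auto
  then have "card (symd X Y) = card (X \<union> Y) - card (X \<inter> Y)"
    using card_Diff_subset[of "X \<inter> Y" "X \<union> Y"] assms by auto
  moreover have "card (X \<union> Y) + card (X \<inter> Y) = card X + card Y"
    using card_Un_Int[OF assms] by simp
  moreover have "card (X \<inter> Y) \<le> card (X \<union> Y)" using assms by (intro card_mono) auto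
  ultimately have "card (symd X Y) + 2 * card (X \<inter> Y) = card X + card Y" by linarith
  then have "par (symd X Y) * (-1) ^ (2 * card (X \<inter> Y)) = par X * par Y"
    unfolding par_def by (metis power_add)
  then show ?thesis by (simp add: power_mult)
qed

definition Padj :: "nat set \<Rightarrow> nat set \<Rightarrow> (nat \<times> nat) set" where
  "Padj E N = {(i, j). i \<in> E \<and> j \<in> N \<and> i \<le> j + 1 \<and> j \<le> i + 1}"

lemma Padj_finite: "finite E \<Longrightarrow> finite N \<Longrightarrow> finite (Padj E N)"
  unfolding Padj_def by (rule finite_subset[of _ "E \<times> N"]) auto

lemma qsign_exp_Padj:
  "qsign_exp p p' = card (Padj (fst p') (snd p)) + card (fst p \<inter> fst p') + card (snd p \<inter> snd p')"
  unfolding qsign_exp_def Padj_def by simp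

lemma qsgn_par: "qsgn p p' = par (Padj (fst p') (snd p)) * par (fst p \<inter> fst p') * par (snd p \<inter> snd p')"
  unfolding qsgn_def qsign_exp_Padj par_def by (simp add: power_add)

lemma qsgn_psymd_left:
  assumes "a \<in> qbasis n" "a' \<in> qbasis n" "b \<in> qbasis n"
  shows "qsgn (psymd a a') b = qsgn a b * qsgn a' b"
proof -
  note fin = qbasis_finite[OF assms(1)] qbasis_finite[OF assms(2)] qbasis_finite[OF assms(3)]
  have "Padj (fst b) (symd (snd a) (snd a')) = symd (Padj (fst b) (snd a)) (Padj (fst b) (snd a'))"
    "symd (fst a) (fst a') \<inter> fst b = symd (fst a \<inter> fst b) (fst a' \<inter> fst b)"
    "symd (snd a) (snd a') \<inter> snd b = symd (snd a \<inter> snd b) (snd a' \<inter> snd b)"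
    unfolding Padj_def symd_def by auto
  then show ?thesis
    unfolding qsgn_par psymd_def using fin by (simp add: par_symd Padj_finite)
qed

lemma qsgn_psymd_right:
  assumes "a \<in> qbasis n" "b \<in> qbasis n" "b' \<in> qbasis n"
  shows "qsgn a (psymd b b') = qsgn a b * qsgn a b'"
proof -
  note fin = qbasis_finite[OF assms(1)] qbasis_finite[OF assms(2)] qbasis_finite[OF assms(3)]
  have "Padj (symd (fst b) (fst b')) (snd a) = symd (Padj (fst b) (snd a)) (Padj (fst b') (snd a))"
    "fst a \<inter> symd (fst b) (fst b') = symd (fst a \<inter> fst b) (fst a \<inter> fst b')"
    "snd a \<inter> symd (snd b) (snd b') = symd (snd a \<inter> snd b) (snd a \<inter> snd b')"
    unfolding Padj_def symd_def by auto
  then show ?thesis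
    unfolding qsgn_par psymd_def using fin by (simp add: par_symd Padj_finite)
qed

lemma qsgn_square: "qsgn a b * qsgn a b = 1"
  unfolding qsgn_def by (simp flip: power_add)

text \<open>Bilinearity makes the sign a 2-cocycle, which is exactly what associativity needs.\<close>
lemma qsgn_cocycle:
  assumes "p \<in> qbasis n" "r \<in> qbasis n" "c \<in> qbasis n"
  shows "qsgn r (psymd r c) * qsgn p (psymd p r) = qsgn p (psymd p c) * qsgn (psymd p r) (psymd r c)"
proof -
  have rc: "psymd r c \<in> qbasis n" using assms psymd_qbasis by blast
  have "qsgn p (psymd p c) * qsgn (psymd p r) (psymd r c)
      = (qsgn p c * qsgn p c) * (qsgn p p * qsgn p r * qsgn r r * qsgn r c)"
    using assms rc by (simp add: qsgn_psymd_left qsgn_psymd_right ac_simps)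
  also have "\<dots> = qsgn r (psymd r c) * qsgn p (psymd p r)"
    using assms by (simp add: qsgn_square qsgn_psymd_right ac_simps)
  finally show ?thesis ..
qed

lemma qmult_assoc: "qmult n (qmult n x y) z = qmult n x (qmult n y z)"
proof
  fix c
  show "qmult n (qmult n x y) z c = qmult n x (qmult n y z) c"
  proof (cases "c \<in> qbasis n")
    case False then show ?thesis by (simp add: qmult_alt)
  next
    case c: True
    have "qmult n (qmult n x y) z c = (\<Sum>r\<in>qbasis n. \<Sum>p\<in>qbasis n.
        qsgn r (psymd r c) * qsgn p (psymd p r) * x p * y (psymd p r) * z (psymd r c))"
      using c by (simp add: qmult_alt[of n _ _ c] qmult_alt[of n x y] sum_distrib_left
          sum_distrib_right ac_simps cong: sum.cong)
    also have "\<dots> = (\<Sum>p\<in>qbasis n. \<Sum>r\<in>qbasis n.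
        qsgn p (psymd p c) * qsgn (psymd p r) (psymd r c) * x p * y (psymd p r) * z (psymd r c))"
      by (subst sum.swap) (simp add: qsgn_cocycle[OF _ _ c] cong: sum.cong)
    also have "\<dots> = qmult n x (qmult n y z) c"
    proof -
      text \<open>Reindex the inner sum of the right-hand side by t = p + r.\<close>
      have reindex: "(\<Sum>t\<in>qbasis n. qsgn t (psymd t (psymd p c)) * y t * z (psymd t (psymd p c)))
          = (\<Sum>r\<in>qbasis n. qsgn (psymd p r) (psymd r c) * y (psymd p r) * z (psymd r c))"
        if p: "p \<in> qbasis n" for p
      proof -
        have "(\<Sum>t\<in>qbasis n. qsgn t (psymd t (psymd p c)) * y t * z (psymd t (psymd p c)))
          = (\<Sum>r\<in>qbasis n. qsgn (psymd p r) (psymd (psymd p r) (psymd p c))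
              * y (psymd p r) * z (psymd (psymd p r) (psymd p c)))"
          by (rule sum.reindex_bij_witness[of _ "psymd p" "psymd p"]) (auto simp: psymd_qbasis p)
        then show ?thesis by (simp add: psymd_assoc)
      qed
      have "qmult n x (qmult n y z) c = (\<Sum>p\<in>qbasis n. qsgn p (psymd p c) * x p *
          (\<Sum>t\<in>qbasis n. qsgn t (psymd t (psymd p c)) * y t * z (psymd t (psymd p c))))"
        using c by (simp add: qmult_alt[of n _ _ c] qmult_alt[of n y z] psymd_qbasis cong: sum.cong)
      also have "\<dots> = (\<Sum>p\<in>qbasis n. \<Sum>r\<in>qbasis n.
          qsgn p (psymd p c) * qsgn (psymd p r) (psymd r c) * x p * y (psymd p r) * z (psymd r c))"
        by (rule sum.cong[OF refl], subst reindex) (simp_all add: sum_distrib_left ac_simps)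
      finally show ?thesis ..
    qed
    finally show ?thesis .
  qed
qed

definition qsupported :: "nat \<Rightarrow> qelem \<Rightarrow> bool" where
  "qsupported n x \<longleftrightarrow> (\<forall>c. c \<notin> qbasis n \<longrightarrow> x c = 0)"

lemma qsupported_qmult: "qsupported n (qmult n x y)"
  unfolding qsupported_def by (simp add: qmult_alt)

lemma qsupported_qone: "qsupported n qone"
  unfolding qsupported_def qone_def qbw_def by auto

lemma qsgn_empty [simp]: "qsgn ({}, {}) c = 1" "qsgn c ({}, {}) = 1"
  unfolding qsgn_def qsign_exp_def by simp_all

lemma qmult_one_left: "qsupported n x \<Longrightarrow> qmult n qone x = x"
proof
  fix c assume x: "qsupported n x"
  show "qmult n qone x c = x c"
  proof (cases "c \<in> qbasis n")
    case True
    have "qmult n qone x c = (\<Sum>p\<in>qbasis n. qsgn p (psymd p c) * qone p * x (psymd p c))"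
      using True by (simp add: qmult_alt)
    also have "\<dots> = (\<Sum>p\<in>qbasis n. if p = ({}, {}) then x c else 0)"
      by (rule sum.cong) (auto simp: qone_def qbw_def)
    finally show ?thesis by simp
  qed (use x in \<open>simp add: qmult_alt qsupported_def del: split_paired_All\<close>)
qed

lemma qmult_one_right: "qsupported n x \<Longrightarrow> qmult n x qone = x"
proof
  fix c assume x: "qsupported n x"
  show "qmult n x qone c = x c"
  proof (cases "c \<in> qbasis n")
    case True
    have "qmult n x qone c = (\<Sum>p\<in>qbasis n. qsgn p (psymd p c) * x p * qone (psymd p c))"
      using True by (simp add: qmult_alt)
    also have "\<dots> = (\<Sum>p\<in>qbasis n. if p = c then x c else 0)"
    proof (rule sum.cong[OF refl])
      fix p
      have "psymd p c = ({}, {}) \<longleftrightarrow> p = c" by (metis psymd_eq_iff psymd_empty(1))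
      then show "qsgn p (psymd p c) * x p * qone (psymd p c) = (if p = c then x c else 0)"
        by (auto simp: qone_def qbw_def)
    qed
    finally show ?thesis using True by simp
  qed (use x in \<open>simp add: qmult_alt qsupported_def del: split_paired_All\<close>)
qed

lemma qmult_qadd_left: "qmult n (qadd x y) z = qadd (qmult n x z) (qmult n y z)"
  by (rule ext) (simp add: qmult_alt qadd_def sum.distrib algebra_simps)
lemma qmult_qadd_right: "qmult n x (qadd y z) = qadd (qmult n x y) (qmult n x z)"
  by (rule ext) (simp add: qmult_alt qadd_def sum.distrib algebra_simps)
lemma qmult_qscale_left: "qmult n (qscale a x) z = qscale a (qmult n x z)"
  by (rule ext) (simp add: qmult_alt qscale_def sum_distrib_left algebra_simps)
lemma qmult_qscale_right: "qmult n x (qscale a z) = qscale a (qmult n x z)"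
  by (rule ext) (simp add: qmult_alt qscale_def sum_distrib_left algebra_simps)

lemma qscale_qscale [simp]: "qscale a (qscale b x) = qscale (a * b) x"
  unfolding qscale_def by (simp add: mult.assoc)

lemma Tr_qadd [simp]: "Tr (qadd x y) = Tr x + Tr y"
  unfolding Tr_def qadd_def by simp
lemma Tr_qscale [simp]: "Tr (qscale a x) = a * Tr x"
  unfolding Tr_def qscale_def by simp
lemma Tr_qone [simp]: "Tr qone = 1"
  unfolding Tr_def qone_def qbw_def by simp

text \<open>Tr pairs each basis word with itself, so it is a trace: Tr(xy) = Tr(yx).\<close>
lemma Tr_qmult: "Tr (qmult n x y) = (\<Sum>p\<in>qbasis n. qsgn p p * x p * y p)"
  unfolding Tr_def by (simp add: qmult_alt)

lemma Tr_comm: "Tr (qmult n x y) = Tr (qmult n y x)"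
  unfolding Tr_qmult by (simp add: ac_simps)

section \<open>The elements s_i satisfy the Hecke relations\<close>

lemma qbw_mult:
  assumes "a \<in> qbasis n" "b \<in> qbasis n"
  shows "qmult n (qbw (fst a) (snd a)) (qbw (fst b) (snd b))
       = qscale (qsgn a b) (qbw (fst (psymd a b)) (snd (psymd a b)))"
proof
  fix c
  show "qmult n (qbw (fst a) (snd a)) (qbw (fst b) (snd b)) c
       = qscale (qsgn a b) (qbw (fst (psymd a b)) (snd (psymd a b))) c"
  proof (cases "c \<in> qbasis n")
    case True
    have "qmult n (qbw (fst a) (snd a)) (qbw (fst b) (snd b)) c
        = (\<Sum>p\<in>qbasis n. if p = a then (if c = psymd a b then qsgn a b else 0) else 0)"
    proof -
      have "psymd a c = b \<longleftrightarrow> c = psymd a b" by (metis psymd_psymd)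
      then have "qsgn p (psymd p c) * qbw (fst a) (snd a) p * qbw (fst b) (snd b) (psymd p c)
          = (if p = a then (if c = psymd a b then qsgn a b else 0) else 0)" for p
        by (auto simp: qbw_def)
      then show ?thesis using True by (simp add: qmult_alt)
    qed
    then show ?thesis using assms by (simp add: qscale_def qbw_def)
  next
    case False
    then have "c \<noteq> psymd a b" using psymd_qbasis assms by blast
    then show ?thesis using False by (simp add: qmult_alt qscale_def qbw_def)
  qed
qed

text \<open>The relations between s_i and s_j only involve the generators u_i, v_i, u_j, v_j.
Basis words in these four generators are indexed by four booleans (exponents of u_i, u_j,
v_i, v_j); products of such words are computed by the boolean sign function loc_sgn, whose
only dependence on i and j is whether they are adjacent.  This turns the relations into
finite case checks.\<close>

definition pair_set :: "nat \<Rightarrow> nat \<Rightarrow> bool \<Rightarrow> bool \<Rightarrow> nat set" where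
  "pair_set i j a b = {x. x = i \<and> a \<or> x = j \<and> b}"

type_synonym loc_idx = "bool \<times> bool \<times> bool \<times> bool"

fun loc :: "nat \<Rightarrow> nat \<Rightarrow> loc_idx \<Rightarrow> nat set \<times> nat set" where
  "loc i j (e1, e2, n1, n2) = (pair_set i j e1 e2, pair_set i j n1 n2)"

fun loc_xor :: "loc_idx \<Rightarrow> loc_idx \<Rightarrow> loc_idx" where
  "loc_xor (e1, e2, n1, n2) (e1', e2', n1', n2') = (e1 \<noteq> e1', e2 \<noteq> e2', n1 \<noteq> n1', n2 \<noteq> n2')"

fun loc_sgn :: "bool \<Rightarrow> loc_idx \<Rightarrow> loc_idx \<Rightarrow> nat" where
  "loc_sgn adj (e1, e2, n1, n2) (e1', e2', n1', n2') =
     of_bool (e1' \<and> n1) + of_bool (e2' \<and> n2) + (if adj then of_bool (e1' \<and> n2) + of_bool (e2' \<and> n1) else 0)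
     + of_bool (e1 \<and> e1') + of_bool (e2 \<and> e2') + of_bool (n1 \<and> n1') + of_bool (n2 \<and> n2')"

definition locw :: "nat \<Rightarrow> nat \<Rightarrow> loc_idx \<Rightarrow> qelem" where
  "locw i j p = qbw (fst (loc i j p)) (snd (loc i j p))"

lemma pair_set_simps [simp]:
  "pair_set i j False False = {}" "pair_set i j True False = {i}"
  "pair_set i j False True = {j}" "pair_set i j True True = {i, j}"
  unfolding pair_set_def by auto

lemma pair_set_symd: "i \<noteq> j \<Longrightarrow> symd (pair_set i j a b) (pair_set i j a' b') = pair_set i j (a \<noteq> a') (b \<noteq> b')"
  unfolding pair_set_def symd_def by auto

lemma pair_set_Int: "i \<noteq> j \<Longrightarrow> pair_set i j a b \<inter> pair_set i j a' b' = pair_set i j (a \<and> a') (b \<and> b')"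
  unfolding pair_set_def by auto

lemma pair_set_card: "i \<noteq> j \<Longrightarrow> card (pair_set i j a b) = of_bool a + of_bool b"
  by (cases a; cases b) auto

lemma pair_set_inj: "i \<noteq> j \<Longrightarrow> pair_set i j a b = pair_set i j a' b' \<longleftrightarrow> a = a' \<and> b = b'"
  unfolding pair_set_def by (auto simp: set_eq_iff)

lemma card_Padj_pair_set:
  assumes "i \<noteq> j"
  shows "card (Padj (pair_set i j e1 e2) (pair_set i j n1 n2)) = of_bool (e1 \<and> n1) + of_bool (e2 \<and> n2)
     + (if i \<le> j + 1 \<and> j \<le> i + 1 then of_bool (e1 \<and> n2) + of_bool (e2 \<and> n1) else 0)"
proof -
  define adj where "adj = (i \<le> j + 1 \<and> j \<le> i + 1)"
  have "Padj (pair_set i j e1 e2) (pair_set i j n1 n2) = (if e1 \<and> n1 then {(i,i)} else {})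
     \<union> (if e2 \<and> n2 then {(j,j)} else {}) \<union> (if e1 \<and> n2 \<and> adj then {(i,j)} else {})
     \<union> (if e2 \<and> n1 \<and> adj then {(j,i)} else {})"
    unfolding Padj_def pair_set_def adj_def by auto
  then show ?thesis
    using assms unfolding adj_def[symmetric]
    by (cases e1; cases e2; cases n1; cases n2; cases adj) (auto simp: card_insert_if)
qed

lemma loc_psymd: "i \<noteq> j \<Longrightarrow> psymd (loc i j p) (loc i j p') = loc i j (loc_xor p p')"
  by (cases p; cases p') (simp add: psymd_def pair_set_symd)

lemma loc_qsgn: "i \<noteq> j \<Longrightarrow> qsgn (loc i j p) (loc i j p') = (-1) ^ loc_sgn (i \<le> j + 1 \<and> j \<le> i + 1) p p'"
  by (cases p; cases p')
    (simp add: qsgn_def qsign_exp_Padj pair_set_Int pair_set_card card_Padj_pair_set)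

lemma loc_qbasis: "loc i j (e1, e2, n1, n2) \<in> qbasis n \<longleftrightarrow>
    ((e1 \<or> n1) \<longrightarrow> 0 < i \<and> i < n) \<and> ((e2 \<or> n2) \<longrightarrow> 0 < j \<and> j < n)"
  by (cases e1; cases e2; cases n1; cases n2) (auto simp: qbasis_def)

lemma loc_inj: "i \<noteq> j \<Longrightarrow> loc i j p = loc i j p' \<longleftrightarrow> p = p'"
  by (cases p; cases p') (simp add: pair_set_inj)

lemma locw_mult:
  assumes "i \<noteq> j" "loc i j p \<in> qbasis n" "loc i j p' \<in> qbasis n"
  shows "qmult n (locw i j p) (locw i j p')
       = qscale ((-1) ^ loc_sgn (i \<le> j + 1 \<and> j \<le> i + 1) p p') (locw i j (loc_xor p p'))"
  unfolding locw_def using qbw_mult[OF assms(2,3)] by (simp add: loc_psymd loc_qsgn assms(1))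

lemma locw_apply: "locw i j p c = (if c = loc i j p then 1 else 0)"
  unfolding locw_def qbw_def by (cases "loc i j p") auto

lemma locw_one: "qone = locw i j (False, False, False, False)"
  unfolding qone_def locw_def by simp
lemma locw_fst: "qu i = locw i j (True, False, False, False)" "qv i = locw i j (False, False, True, False)"
  unfolding qu_def qv_def locw_def by simp_all
lemma locw_snd: "qu j = locw i j (False, True, False, False)" "qv j = locw i j (False, False, False, True)"
  unfolding qu_def qv_def locw_def by simp_all

lemma loc_ext:
  assumes "i \<noteq> j" "\<And>p. X (loc i j p) = Y (loc i j p)" "\<And>c. (\<forall>p. c \<noteq> loc i j p) \<Longrightarrow> X c = Y c"
  shows "X = Y"
proof
  fix c show "X c = Y c"
    using assms(2,3) by (cases "\<exists>p. c = loc i j p") auto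
qed

declare loc.simps [simp del]

text \<open>s_i is the scalar multiple -1/(2q) of a_i; the relations are checked for a_i.\<close>
definition qa :: "nat \<Rightarrow> nat \<Rightarrow> qelem" where
  "qa n i = qadd (qadd qone (qu i)) (qadd (qv i) (qmult n (qu i) (qv i)))"

lemma qs_qa: "qs q n i = qscale (-1 / (2 * q)) (qa n i)"
  unfolding qs_def qa_def by simp

lemma qscale_one [simp]: "qscale 1 x = x"
  unfolding qscale_def by simp

lemma qa_loc_fst:
  assumes "1 \<le> i" "i < n" "i \<noteq> j"
  shows "qa n i = qadd (qadd (locw i j (False,False,False,False)) (locw i j (True,False,False,False)))
                       (qadd (locw i j (False,False,True,False)) (locw i j (True,False,True,False)))"
  unfolding qa_def locw_one[of i j] locw_fst[of i j]
  using assms by (simp add: locw_mult loc_qbasis Suc_le_eq)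

lemma qa_loc_snd:
  assumes "1 \<le> j" "j < n" "i \<noteq> j"
  shows "qa n j = qadd (qadd (locw i j (False,False,False,False)) (locw i j (False,True,False,False)))
                       (qadd (locw i j (False,False,False,True)) (locw i j (False,True,False,True)))"
  unfolding qa_def locw_one[of i j] locw_snd[of j i]
  using assms by (simp add: locw_mult loc_qbasis Suc_le_eq)

lemmas qalg_simps = qmult_qadd_left qmult_qadd_right qmult_qscale_left qmult_qscale_right
  locw_mult loc_qbasis

lemma qa_braid:
  assumes "1 \<le> i" "Suc i < n"
  shows "qmult n (qa n i) (qmult n (qa n (Suc i)) (qa n i))
       = qmult n (qa n (Suc i)) (qmult n (qa n i) (qa n (Suc i)))"
proof -
  have ij: "i \<noteq> Suc i" "1 \<le> Suc i" "i < n" "0 < i" using assms by auto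
  show ?thesis
    unfolding qa_loc_fst[OF assms(1) ij(3) ij(1)] qa_loc_snd[OF ij(2) assms(2) ij(1)]
    apply (simp add: qalg_simps ij assms)
    apply (rule loc_ext[OF ij(1)])
    subgoal for p by (cases p) (auto simp: qadd_def qscale_def locw_apply loc_inj ij)
    subgoal for c by (simp add: qadd_def qscale_def locw_apply)
    done
qed

lemma qa_comm:
  assumes "1 \<le> i" "Suc i < j" "j < n"
  shows "qmult n (qa n i) (qa n j) = qmult n (qa n j) (qa n i)"
proof -
  have ij: "i \<noteq> j" "1 \<le> j" "i < n" "0 < i" "0 < j" "\<not> j \<le> Suc i" using assms by auto
  show ?thesis
    unfolding qa_loc_fst[OF assms(1) ij(3) ij(1)] qa_loc_snd[OF ij(2) assms(3) ij(1)]
    apply (simp add: qalg_simps ij assms)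
    apply (rule loc_ext[OF ij(1)])
    subgoal for p by (cases p) (auto simp: qadd_def qscale_def locw_apply loc_inj ij)
    subgoal for c by (simp add: qadd_def qscale_def locw_apply)
    done
qed

lemma qa_quad:
  assumes "1 \<le> i" "i < n"
  shows "qmult n (qa n i) (qa n i) = qadd (qscale 2 (qa n i)) (qscale (-4) qone)"
proof -
  have ij: "i \<noteq> Suc i" "0 < i" using assms by auto
  show ?thesis
    unfolding qa_loc_fst[OF assms ij(1)] locw_one[of i "Suc i"]
    apply (simp add: qalg_simps ij assms)
    apply (rule loc_ext[OF ij(1)])
    subgoal for p by (cases p) (auto simp: qadd_def qscale_def locw_apply loc_inj ij)
    subgoal for c by (simp add: qadd_def qscale_def locw_apply)
    done
qed

lemma qphi_Nil [simp]: "qphi q n [] = qone"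
  unfolding qphi_def by simp

lemma qphi_Cons [simp]: "qphi q n (i # w) = qmult n (qs q n i) (qphi q n w)"
  unfolding qphi_def by simp

lemma qsupported_qphi: "qsupported n (qphi q n w)"
  by (cases w) (auto simp: qsupported_qone qsupported_qmult)

lemma qsupported_qs: "1 \<le> i \<Longrightarrow> i < n \<Longrightarrow> qsupported n (qs q n i)"
  unfolding qs_def qsupported_def qscale_def qadd_def qone_def qu_def qv_def qbw_def
  using qsupported_qmult[unfolded qsupported_def] by (auto simp: qbasis_def)

lemma qphi_append: "qphi q n (a @ b) = qmult n (qphi q n a) (qphi q n b)"
  by (induction a) (simp_all add: qmult_one_left qsupported_qphi qmult_assoc)

lemma qphi_single: "1 \<le> i \<Longrightarrow> i < n \<Longrightarrow> qphi q n [i] = qs q n i"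
  by (simp add: qmult_one_right qsupported_qs)

lemma qphi_braid:
  assumes "1 \<le> i" "Suc i < n"
  shows "qphi q n [i, Suc i, i] = qphi q n [Suc i, i, Suc i]"
proof -
  have "qphi q n [i, Suc i, i] = qmult n (qs q n i) (qmult n (qs q n (Suc i)) (qs q n i))"
      "qphi q n [Suc i, i, Suc i] = qmult n (qs q n (Suc i)) (qmult n (qs q n i) (qs q n (Suc i)))"
    using assms by (simp_all add: qmult_one_right qsupported_qs)
  then show ?thesis
    by (simp add: qs_qa qmult_qscale_left qmult_qscale_right qa_braid[OF assms])
qed

lemma qphi_comm:
  assumes "1 \<le> i" "Suc i < j" "j < n"
  shows "qphi q n [i, j] = qphi q n [j, i]"
proof -
  have "qphi q n [i, j] = qmult n (qs q n i) (qs q n j)" "qphi q n [j, i] = qmult n (qs q n j) (qs q n i)"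
    using assms by (simp_all add: qmult_one_right qsupported_qs)
  then show ?thesis
    by (simp add: qs_qa qmult_qscale_left qmult_qscale_right qa_comm[OF assms] mult.commute)
qed

lemma sixth_root_scalar:
  fixes q :: complex
  assumes "q * q = q - 1"
  shows "-1 / (2 * q) = (q - 1) / 2"
proof -
  have "(q - 1) / 2 * (2 * q) = q * q - q" by (simp add: field_simps)
  also have "\<dots> = -1" using assms by simp
  finally have "-1 = (q - 1) / 2 * (2 * q)" ..
  moreover have "q \<noteq> 0" using assms by auto
  ultimately show ?thesis by (simp add: divide_eq_eq)
qed

text \<open>The quadratic relation s_i^2 = (q - 1) s_i + q is where q^2 = q - 1 is needed.\<close>
lemma qphi_quad:
  assumes q: "q * q = q - 1" and i: "1 \<le> i" "i < n"
  shows "qphi q n [i, i] = qadd (qscale (q - 1) (qphi q n [i])) (qscale q (qphi q n []))"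
proof -
  define c where "c = (q - 1) / 2"
  have s: "qs q n i = qscale c (qa n i)"
    unfolding qs_qa c_def sixth_root_scalar[OF q] ..
  have coeffs: "c * c * 2 = (q - 1) * c" "c * c * (-4) = q"
    unfolding c_def using q by (simp_all add: field_simps)
  have "qphi q n [i, i] = qmult n (qs q n i) (qs q n i)"
    using i by (simp add: qmult_one_right qsupported_qs)
  also have "\<dots> = qscale (c * c) (qadd (qscale 2 (qa n i)) (qscale (-4) qone))"
    unfolding s qmult_qscale_left qmult_qscale_right qa_quad[OF i] by simp
  finally have sq: "qphi q n [i, i] = qscale (c * c) (qadd (qscale 2 (qa n i)) (qscale (-4) qone))" .
  have single: "qphi q n [i] = qscale c (qa n i)" unfolding qphi_single[OF i] s ..
  have "c * c * (2 * qa n i p + - 4 * qone p) = (c * c * 2) * qa n i p + (c * c * (-4)) * qone p" for p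
    by (simp add: algebra_simps)
  then have "c * c * (2 * qa n i p + - 4 * qone p) = (q - 1) * (c * qa n i p) + q * qone p" for p
    unfolding coeffs by (simp add: mult.assoc)
  then show ?thesis
    unfolding sq single qphi_Nil by (simp add: fun_eq_iff qadd_def qscale_def)
qed

section \<open>Factorization of Tr over disjoint index ranges\<close>

text \<open>If x only involves the generators u_m, v_m and y only generators of index below m,
then the identity word occurs in xy only from the pair (1, 1); hence Tr(xy) = x(1) Tr(y).
This gives both the Markov property of Tr o phi and the stated factorization.\<close>

definition supported_by :: "(nat set \<times> nat set \<Rightarrow> bool) \<Rightarrow> qelem \<Rightarrow> bool" where
  "supported_by P x \<longleftrightarrow> (\<forall>p. x p \<noteq> 0 \<longrightarrow> P p)"

definition below :: "nat \<Rightarrow> nat set \<times> nat set \<Rightarrow> bool" where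
  "below m p \<longleftrightarrow> (\<forall>k \<in> fst p \<union> snd p. k < m)"

definition at_index :: "nat \<Rightarrow> nat set \<times> nat set \<Rightarrow> bool" where
  "at_index m p \<longleftrightarrow> fst p \<subseteq> {m} \<and> snd p \<subseteq> {m}"

lemma supported_byD: "supported_by P x \<Longrightarrow> x p \<noteq> 0 \<Longrightarrow> P p"
  unfolding supported_by_def by blast

lemma supported_by_qbw: "P (E, N) \<Longrightarrow> supported_by P (qbw E N)"
  unfolding supported_by_def qbw_def by auto

lemma supported_by_qone: "P ({}, {}) \<Longrightarrow> supported_by P qone"
  unfolding qone_def by (rule supported_by_qbw)

lemma supported_by_qadd: "supported_by P x \<Longrightarrow> supported_by P y \<Longrightarrow> supported_by P (qadd x y)"
  unfolding supported_by_def qadd_def by (metis add.left_neutral)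

lemma supported_by_qscale: "supported_by P x \<Longrightarrow> supported_by P (qscale a x)"
  unfolding supported_by_def qscale_def by auto

lemma supported_by_qmult:
  assumes closed: "\<And>a b. P a \<Longrightarrow> P b \<Longrightarrow> P (psymd a b)"
    and x: "supported_by P x" and y: "supported_by P y"
  shows "supported_by P (qmult n x y)"
  unfolding supported_by_def
proof (intro allI impI)
  fix c assume "qmult n x y c \<noteq> 0"
  then obtain p where "qsgn p (psymd p c) * x p * y (psymd p c) \<noteq> 0"
    by (metis (no_types, lifting) qmult_alt sum.neutral)
  then have "x p \<noteq> 0" "y (psymd p c) \<noteq> 0" by auto
  then have "P p" "P (psymd p c)" using x y by (blast intro: supported_byD)+
  then show "P c" using closed by fastforce
qed

lemma below_psymd: "below m a \<Longrightarrow> below m b \<Longrightarrow> below m (psymd a b)"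
  unfolding below_def psymd_def symd_def by auto

lemma at_index_psymd: "at_index m a \<Longrightarrow> at_index m b \<Longrightarrow> at_index m (psymd a b)"
  unfolding at_index_def psymd_def symd_def by auto

lemma Tr_factor:
  assumes x: "supported_by (at_index m) x" and y: "supported_by (below m) y"
  shows "Tr (qmult n x y) = x ({}, {}) * Tr y"
proof -
  have "x p * y p = 0" if "p \<noteq> ({}, {})" for p
  proof (rule ccontr)
    assume "x p * y p \<noteq> 0"
    then have "at_index m p" "below m p" using x y by (auto intro: supported_byD)
    then show False using that unfolding at_index_def below_def
      by (cases p) (auto simp: subset_singleton_iff)
  qed
  then have "Tr (qmult n x y) = (\<Sum>p\<in>qbasis n. if p = ({}, {}) then x p * y p else 0)"
    unfolding Tr_qmult by (intro sum.cong) auto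
  then show ?thesis by (simp add: Tr_def)
qed

lemma below_qs: "i < m \<Longrightarrow> supported_by (below m) (qs q n i)"
  unfolding qs_def qu_def qv_def
  by (intro supported_by_qscale supported_by_qadd supported_by_qone supported_by_qbw
      supported_by_qmult below_psymd) (auto simp: below_def)

lemma below_qphi: "set w \<subseteq> {1..<m} \<Longrightarrow> supported_by (below m) (qphi q n w)"
  by (induction w) (auto intro!: supported_by_qmult below_psymd below_qs supported_by_qone
      simp: below_def)

lemma below_qsubalg: "b \<in> qsubalg n k \<Longrightarrow> supported_by (below k) b"
proof (induction rule: qsubalg.induct)
  case (mult x y) then show ?case by (blast intro: supported_by_qmult below_psymd)
qed (auto intro: supported_by_qone supported_by_qadd supported_by_qscale supported_by_qbw
    simp: qu_def qv_def below_def)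

lemma at_index_qs: "supported_by (at_index m) (qs q n m)"
  unfolding qs_def qu_def qv_def
  by (intro supported_by_qscale supported_by_qadd supported_by_qone supported_by_qbw
      supported_by_qmult at_index_psymd) (auto simp: at_index_def)

lemma at_index_qf: "supported_by (at_index m) (qf q n m)"
  unfolding qf_def
  by (intro supported_by_qscale supported_by_qadd supported_by_qone at_index_qs)
    (auto simp: at_index_def)

lemma qs_identity_coeff:
  assumes "1 \<le> m" "m < n"
  shows "qs q n m ({}, {}) = -1 / (2 * q)"
  unfolding qs_qa qa_loc_fst[OF assms n_not_Suc_n]
  by (simp add: qscale_def qadd_def locw_apply loc.simps)

lemma Tr_qphi_markov:
  assumes "1 \<le> m" "m < n" "set x \<subseteq> {1..<m}"
  shows "Tr (qphi q n (x @ [m])) = -1 / (2 * q) * Tr (qphi q n x)"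
proof -
  have "Tr (qphi q n (x @ [m])) = Tr (qmult n (qs q n m) (qphi q n x))"
    unfolding qphi_append qphi_single[OF assms(1,2)] by (rule Tr_comm)
  also have "\<dots> = qs q n m ({}, {}) * Tr (qphi q n x)"
    by (rule Tr_factor[OF at_index_qs below_qphi[OF assms(3)]])
  finally show ?thesis using qs_identity_coeff[OF assms(1,2)] by simp
qed

section \<open>Uniqueness of functionals with the Markov property\<close>

text \<open>A word [i_1, ..., i_k] over {1..<n} stands for g_(i_1) ... g_(i_k) in H_n(q); a linear
functional on H_n(q) is a function on such words compatible with the defining relations.\<close>

definition hecke_on :: "nat \<Rightarrow> complex \<Rightarrow> (nat list \<Rightarrow> complex) \<Rightarrow> bool" where
  "hecke_on n q \<phi> \<longleftrightarrow> (\<forall>a b. set a \<subseteq> {1..<n} \<longrightarrow> set b \<subseteq> {1..<n} \<longrightarrow>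
    (\<forall>i. 1 \<le> i \<and> Suc i < n \<longrightarrow> \<phi> (a @ [i, Suc i, i] @ b) = \<phi> (a @ [Suc i, i, Suc i] @ b)) \<and>
    (\<forall>i j. 1 \<le> i \<and> Suc i < j \<and> j < n \<longrightarrow> \<phi> (a @ [i, j] @ b) = \<phi> (a @ [j, i] @ b)) \<and>
    (\<forall>i. 1 \<le> i \<and> i < n \<longrightarrow> \<phi> (a @ [i, i] @ b) = (q - 1) * \<phi> (a @ [i] @ b) + q * \<phi> (a @ b)))"

lemma hecke_on_braid:
  "hecke_on n q \<phi> \<Longrightarrow> set a \<subseteq> {1..<n} \<Longrightarrow> set b \<subseteq> {1..<n} \<Longrightarrow> 1 \<le> i \<Longrightarrow> Suc i < n \<Longrightarrow>
   \<phi> (a @ [i, Suc i, i] @ b) = \<phi> (a @ [Suc i, i, Suc i] @ b)"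
  unfolding hecke_on_def by blast

lemma hecke_on_comm:
  "hecke_on n q \<phi> \<Longrightarrow> set a \<subseteq> {1..<n} \<Longrightarrow> set b \<subseteq> {1..<n} \<Longrightarrow> 1 \<le> i \<Longrightarrow> Suc i < j \<Longrightarrow> j < n \<Longrightarrow>
   \<phi> (a @ [i, j] @ b) = \<phi> (a @ [j, i] @ b)"
  unfolding hecke_on_def by blast

lemma hecke_on_quad:
  "hecke_on n q \<phi> \<Longrightarrow> set a \<subseteq> {1..<n} \<Longrightarrow> set b \<subseteq> {1..<n} \<Longrightarrow> 1 \<le> i \<Longrightarrow> i < n \<Longrightarrow>
   \<phi> (a @ [i, i] @ b) = (q - 1) * \<phi> (a @ [i] @ b) + q * \<phi> (a @ b)"
  unfolding hecke_on_def by blast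

lemma hecke_on_diff:
  assumes "hecke_on n q \<phi>" "hecke_on n q \<psi>"
  shows "hecke_on n q (\<lambda>w. \<phi> w - \<psi> w)"
  unfolding hecke_on_def
proof (intro allI impI conjI)
  fix a b i j assume ab: "set a \<subseteq> {1..<n}" "set b \<subseteq> {1..<n}"
  show "1 \<le> i \<and> Suc i < n \<Longrightarrow> \<phi> (a @ [i, Suc i, i] @ b) - \<psi> (a @ [i, Suc i, i] @ b)
      = \<phi> (a @ [Suc i, i, Suc i] @ b) - \<psi> (a @ [Suc i, i, Suc i] @ b)"
    using hecke_on_braid[OF assms(1) ab] hecke_on_braid[OF assms(2) ab] by simp
  show "\<phi> (a @ [i, i] @ b) - \<psi> (a @ [i, i] @ b)
      = (q - 1) * (\<phi> (a @ [i] @ b) - \<psi> (a @ [i] @ b)) + q * (\<phi> (a @ b) - \<psi> (a @ b))"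
    if i: "1 \<le> i \<and> i < n"
    unfolding hecke_on_quad[OF assms(1) ab i[THEN conjunct1] i[THEN conjunct2]]
      hecke_on_quad[OF assms(2) ab i[THEN conjunct1] i[THEN conjunct2]]
    by (simp add: algebra_simps)
  show "\<phi> (a @ [i, j] @ b) - \<psi> (a @ [i, j] @ b) = \<phi> (a @ [j, i] @ b) - \<psi> (a @ [j, i] @ b)"
    if ij: "1 \<le> i \<and> Suc i < j \<and> j < n"
    using hecke_on_comm[OF assms(1) ab, of i j] hecke_on_comm[OF assms(2) ab, of i j] ij by (metis (no_types))
qed

lemma hecke_on_ctx:
  assumes "hecke_on n q \<phi>" "set a0 \<subseteq> {1..<n}" "set b0 \<subseteq> {1..<n}"
  shows "hecke_on n q (\<lambda>w. \<phi> (a0 @ w @ b0))"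
  unfolding hecke_on_def
proof (intro allI impI conjI)
  fix a b i j assume "set a \<subseteq> {1..<n}" "set b \<subseteq> {1..<n}"
  then have ab: "set (a0 @ a) \<subseteq> {1..<n}" "set (b @ b0) \<subseteq> {1..<n}" using assms by auto
  show "1 \<le> i \<and> Suc i < n \<Longrightarrow> \<phi> (a0 @ (a @ [i, Suc i, i] @ b) @ b0) = \<phi> (a0 @ (a @ [Suc i, i, Suc i] @ b) @ b0)"
    using hecke_on_braid[OF assms(1) ab, of i] by simp
  show "1 \<le> i \<and> i < n \<Longrightarrow> \<phi> (a0 @ (a @ [i, i] @ b) @ b0)
      = (q - 1) * \<phi> (a0 @ (a @ [i] @ b) @ b0) + q * \<phi> (a0 @ (a @ b) @ b0)"
    using hecke_on_quad[OF assms(1) ab, of i] by simp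
  show "1 \<le> i \<and> Suc i < j \<and> j < n \<Longrightarrow> \<phi> (a0 @ (a @ [i, j] @ b) @ b0) = \<phi> (a0 @ (a @ [j, i] @ b) @ b0)"
    using hecke_on_comm[OF assms(1) ab, of i j] by simp
qed

lemma hecke_on_commute_past:
  assumes "hecke_on n q \<phi>" "m < n" "set a \<subseteq> {1..<n}" "set b \<subseteq> {1..<n}"
    and "\<forall>k\<in>set v. 1 \<le> k \<and> Suc k < m"
  shows "\<phi> (a @ [m] @ v @ b) = \<phi> (a @ v @ [m] @ b)"
  using assms(3,5)
proof (induction v arbitrary: a)
  case (Cons k v)
  have k: "1 \<le> k" "Suc k < m" using Cons.prems by auto
  have vb: "set (v @ b) \<subseteq> {1..<n}" using Cons.prems assms(2,4) by force
  have "\<phi> (a @ [m] @ (k # v) @ b) = \<phi> (a @ [k, m] @ (v @ b))"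
    using hecke_on_comm[OF assms(1) Cons.prems(1) vb k assms(2)] by simp
  also have "\<dots> = \<phi> ((a @ [k]) @ v @ [m] @ b)"
    using Cons.IH[of "a @ [k]"] Cons.prems assms(2) k by auto
  finally show ?case by simp
qed simp

text \<open>The next two lemmas are the inductive step of the spanning argument
H_(m+1) = H_m + H_m g_m H_m: a word a g_m v g_m b with v in a smaller range reduces to words
with fewer occurrences of g_m.\<close>
lemma sandwich_low:
  assumes hf: "hecke_on n q \<phi>" and m: "Suc m' < n"
    and ab: "set a \<subseteq> {1..Suc m'}" "set b \<subseteq> {1..Suc m'}" and v: "set v \<subseteq> {1..<m'}"
    and fewer: "\<And>u. set u \<subseteq> {1..Suc m'} \<Longrightarrow>
       count_list u (Suc m') \<le> count_list a (Suc m') + count_list b (Suc m') + 1 \<Longrightarrow> \<phi> u = 0"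
  shows "\<phi> (a @ [Suc m'] @ v @ [Suc m'] @ b) = 0"
proof -
  let ?m = "Suc m'"
  have rng: "set a \<subseteq> {1..<n}" "set b \<subseteq> {1..<n}" "set v \<subseteq> {1..<n}" using ab v m by auto
  have vm: "?m \<notin> set v" and v': "set v \<subseteq> {1..?m}" and small: "\<forall>k\<in>set v. 1 \<le> k \<and> Suc k < ?m" using v by auto
  have "\<phi> (a @ [?m] @ v @ [?m] @ b) = \<phi> ((a @ v) @ [?m, ?m] @ b)"
    using hecke_on_commute_past[OF hf m rng(1) _ small, of "[?m] @ b"] rng m by auto
  also have "\<dots> = (q - 1) * \<phi> ((a @ v) @ [?m] @ b) + q * \<phi> ((a @ v) @ b)"
    by (rule hecke_on_quad[OF hf]) (use rng m in auto)
  also have "\<dots> = 0"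
    using fewer[of "(a @ v) @ [?m] @ b"] fewer[of "(a @ v) @ b"] ab v' vm
    by (auto simp: count_list_0_iff)
  finally show ?thesis .
qed

lemma sandwich_mid:
  assumes hf: "hecke_on n q \<phi>" and m: "Suc m' < n" "1 \<le> m'"
    and ab: "set a \<subseteq> {1..Suc m'}" "set b \<subseteq> {1..Suc m'}"
    and xy: "set x \<subseteq> {1..<m'}" "set y \<subseteq> {1..<m'}"
    and fewer: "\<And>u. set u \<subseteq> {1..Suc m'} \<Longrightarrow>
       count_list u (Suc m') \<le> count_list a (Suc m') + count_list b (Suc m') + 1 \<Longrightarrow> \<phi> u = 0"
  shows "\<phi> (a @ [Suc m'] @ (x @ [m'] @ y) @ [Suc m'] @ b) = 0"
proof -
  let ?m = "Suc m'"
  have rng: "set a \<subseteq> {1..<n}" "set b \<subseteq> {1..<n}" "set x \<subseteq> {1..<n}" "set y \<subseteq> {1..<n}"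
    using ab xy m by auto
  have small: "\<forall>k\<in>set x. 1 \<le> k \<and> Suc k < ?m" "\<forall>k\<in>set y. 1 \<le> k \<and> Suc k < ?m" using xy by auto
  have "\<phi> (a @ [?m] @ (x @ [m'] @ y) @ [?m] @ b) = \<phi> (a @ x @ [?m] @ ([m'] @ y @ [?m] @ b))"
    using hecke_on_commute_past[OF hf m(1) rng(1) _ small(1), of "[m'] @ y @ [?m] @ b"] rng m by auto
  also have "\<dots> = \<phi> ((a @ x @ [?m, m']) @ [?m] @ y @ b)"
    using hecke_on_commute_past[OF hf m(1) _ rng(2) small(2), of "a @ x @ [?m, m']"] rng m by auto
  also have "\<dots> = \<phi> ((a @ x) @ [m', ?m, m'] @ (y @ b))"
    using hecke_on_braid[OF hf, of "a @ x" "y @ b" m'] rng m by auto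
  also have "\<dots> = 0"
    by (rule fewer) (use ab xy m in \<open>auto simp: count_list_0_iff\<close>)
  finally show ?thesis .
qed

lemma vanish_extend:
  assumes "m < n" "hecke_on n q \<phi>"
    and "\<And>w. set w \<subseteq> {1..<m} \<Longrightarrow> \<phi> w = 0"
    and "1 \<le> m \<Longrightarrow> \<forall>x y. set x \<subseteq> {1..<m} \<longrightarrow> set y \<subseteq> {1..<m} \<longrightarrow> \<phi> (x @ [m] @ y) = 0"
    and "set w \<subseteq> {1..m}"
  shows "\<phi> w = 0"
  using assms
proof (induction m arbitrary: \<phi> w)
  case 0 then show ?case by simp
next
  case (Suc m')
  let ?m = "Suc m'"
  have low: "\<And>w. set w \<subseteq> {1..<?m} \<Longrightarrow> \<phi> w = 0"
    and mid: "\<And>x y. set x \<subseteq> {1..<?m} \<Longrightarrow> set y \<subseteq> {1..<?m} \<Longrightarrow> \<phi> (x @ [?m] @ y) = 0"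
    using Suc.prems(3,4) by auto
  have "\<phi> w = 0" if "set w \<subseteq> {1..?m}" for w
    using that
  proof (induction "count_list w ?m" arbitrary: w rule: less_induct)
    case less
    have not_top: "set u \<subseteq> {1..<?m}" if "set u \<subseteq> {1..?m}" "?m \<notin> set u" for u
      using that by (auto simp: subset_iff le_less)
    show ?case
    proof (cases "?m \<in> set w")
      case False then show ?thesis using low not_top less.prems by blast
    next
      case True
      then obtain a w' where w: "w = a @ ?m # w'" "?m \<notin> set a" by (meson split_list_first)
      show ?thesis
      proof (cases "?m \<in> set w'")
        case False then show ?thesis
          using mid[of a w'] not_top[of a] not_top[of w'] w less.prems by auto
      next
        case True
        then obtain c b where w': "w' = c @ ?m # b" "?m \<notin> set c" by (meson split_list_first)
        have ab: "set a \<subseteq> {1..?m}" "set b \<subseteq> {1..?m}" "set c \<subseteq> {1..?m}"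
          using less.prems w w' by auto
        have fewer: "\<phi> u = 0" if "set u \<subseteq> {1..?m}"
          "count_list u ?m \<le> count_list a ?m + count_list b ?m + 1" for u
          using less.hyps[OF _ that(1)] that(2) w w' by (simp add: count_list_0_iff)
        define \<psi> where "\<psi> v = \<phi> (a @ [?m] @ v @ [?m] @ b)" for v
        have "\<psi> c = 0"
        proof (rule Suc.IH)
          show "hecke_on n q \<psi>"
            unfolding \<psi>_def using hecke_on_ctx[OF Suc.prems(2), of "a @ [?m]" "[?m] @ b"] ab Suc.prems(1)
            by force
          show "\<psi> v = 0" if "set v \<subseteq> {1..<m'}" for v
            unfolding \<psi>_def by (rule sandwich_low[OF Suc.prems(2) Suc.prems(1) ab(1,2) that fewer])
          show "\<forall>x y. set x \<subseteq> {1..<m'} \<longrightarrow> set y \<subseteq> {1..<m'} \<longrightarrow> \<psi> (x @ [m'] @ y) = 0"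
            if "1 \<le> m'"
            unfolding \<psi>_def using sandwich_mid[OF Suc.prems(2) Suc.prems(1) that ab(1,2) _ _ fewer] by blast
          show "set c \<subseteq> {1..m'}" using not_top[OF ab(3) w'(2)] by auto
        qed (use Suc.prems in simp)
        then show ?thesis unfolding \<psi>_def w w' by simp
      qed
    qed
  qed
  then show ?case using Suc.prems(5) .
qed

text \<open>A cyclic functional on H_n(q) with the Markov property \<phi>(x g_m) = z \<phi>(x) and \<phi>(1) = 0
is zero: words x g_m y reduce to y x g_m by cyclicity.\<close>
lemma markov_functional_zero:
  assumes hf: "hecke_on n q D"
    and cyc: "\<And>a b. set a \<subseteq> {1..<n} \<Longrightarrow> set b \<subseteq> {1..<n} \<Longrightarrow> D (a @ b) = D (b @ a)"
    and D0: "D [] = 0"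
    and mk: "\<And>m x. 1 \<le> m \<Longrightarrow> m < n \<Longrightarrow> set x \<subseteq> {1..<m} \<Longrightarrow> D (x @ [m]) = z * D x"
  shows "m < n \<Longrightarrow> set w \<subseteq> {1..m} \<Longrightarrow> D w = 0"
proof (induction m arbitrary: w)
  case 0 then show ?case using D0 by simp
next
  case (Suc m)
  show ?case
  proof (rule vanish_extend[OF Suc.prems(1) hf _ _ Suc.prems(2)])
    show "D w = 0" if "set w \<subseteq> {1..<Suc m}" for w
      using Suc that by (simp add: atLeastLessThanSuc_atLeastAtMost)
    show "\<forall>x y. set x \<subseteq> {1..<Suc m} \<longrightarrow> set y \<subseteq> {1..<Suc m} \<longrightarrow> D (x @ [Suc m] @ y) = 0"
    proof (intro allI impI)
      fix x y assume xy: "set x \<subseteq> {1..<Suc m}" "set y \<subseteq> {1..<Suc m}"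
      have "set (x @ [Suc m]) \<subseteq> {1..<n}" "set y \<subseteq> {1..<n}" using xy Suc.prems(1) by auto
      then have "D (x @ [Suc m] @ y) = D ((y @ x) @ [Suc m])"
        using cyc[of "x @ [Suc m]" y] by simp
      also have "\<dots> = z * D (y @ x)" using mk[of "Suc m" "y @ x"] xy Suc.prems(1) by auto
      also have "D (y @ x) = 0" using Suc xy by (simp add: atLeastLessThanSuc_atLeastAtMost)
      finally show "D (x @ [Suc m] @ y) = 0" by simp
    qed
  qed
qed

lemma markov_functional_unique:
  assumes "hecke_on n q \<phi>" "hecke_on n q \<psi>"
    and "\<And>a b. set a \<subseteq> {1..<n} \<Longrightarrow> set b \<subseteq> {1..<n} \<Longrightarrow> \<phi> (a @ b) = \<phi> (b @ a)"
    and "\<And>a b. set a \<subseteq> {1..<n} \<Longrightarrow> set b \<subseteq> {1..<n} \<Longrightarrow> \<psi> (a @ b) = \<psi> (b @ a)"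
    and "\<phi> [] = 1" "\<psi> [] = 1"
    and "\<And>m x. 1 \<le> m \<Longrightarrow> m < n \<Longrightarrow> set x \<subseteq> {1..<m} \<Longrightarrow> \<phi> (x @ [m]) = z * \<phi> x"
    and "\<And>m x. 1 \<le> m \<Longrightarrow> m < n \<Longrightarrow> set x \<subseteq> {1..<m} \<Longrightarrow> \<psi> (x @ [m]) = z * \<psi> x"
    and w: "set w \<subseteq> {1..<n}"
  shows "\<phi> w = \<psi> w"
proof (cases n)
  case (Suc m)
  have "(\<lambda>w. \<phi> w - \<psi> w) w = 0"
    by (rule markov_functional_zero[OF hecke_on_diff[OF assms(1,2)], of z m])
      (use assms Suc in \<open>auto simp: right_diff_distrib atLeastLessThanSuc_atLeastAtMost\<close>)
  then show ?thesis by simp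
qed (use w assms(5,6) in simp)

lemma posw_range: "set w \<subseteq> {1..<n} \<Longrightarrow> posw w"
  unfolding posw_def by auto

lemma markov_trace_restrict:
  assumes tr: "markov_trace q \<eta> \<tau>" and q: "1 + q \<noteq> 0"
  shows "hecke_on n q \<tau>"
    and "\<And>a b. set a \<subseteq> {1..<n} \<Longrightarrow> set b \<subseteq> {1..<n} \<Longrightarrow> \<tau> (a @ b) = \<tau> (b @ a)"
    and "\<tau> [] = 1"
    and "\<And>m x. 1 \<le> m \<Longrightarrow> set x \<subseteq> {1..<m} \<Longrightarrow> \<tau> (x @ [m]) = (q - (1 + q) * \<eta>) * \<tau> x"
proof -
  have hf: "hecke_functional q \<tau>" using tr unfolding markov_trace_def by blast
  show "hecke_on n q \<tau>"
    unfolding hecke_on_def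
  proof (intro allI impI)
    fix a b assume "set a \<subseteq> {1..<n}" "set b \<subseteq> {1..<n}"
    then have ab: "posw a" "posw b" using posw_range by blast+
    have rel: "\<tau> (a @ [i, Suc i, i] @ b) = \<tau> (a @ [Suc i, i, Suc i] @ b) \<and>
        (Suc i < j \<longrightarrow> \<tau> (a @ [i, j] @ b) = \<tau> (a @ [j, i] @ b)) \<and>
        \<tau> (a @ [i, i] @ b) = (q - 1) * \<tau> (a @ [i] @ b) + q * \<tau> (a @ b)"
      if "1 \<le> i" "1 \<le> j" for i j
      using hf ab that unfolding hecke_functional_def by blast
    show "(\<forall>i. 1 \<le> i \<and> Suc i < n \<longrightarrow> \<tau> (a @ [i, Suc i, i] @ b) = \<tau> (a @ [Suc i, i, Suc i] @ b)) \<and>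
      (\<forall>i j. 1 \<le> i \<and> Suc i < j \<and> j < n \<longrightarrow> \<tau> (a @ [i, j] @ b) = \<tau> (a @ [j, i] @ b)) \<and>
      (\<forall>i. 1 \<le> i \<and> i < n \<longrightarrow> \<tau> (a @ [i, i] @ b) = (q - 1) * \<tau> (a @ [i] @ b) + q * \<tau> (a @ b))"
    proof (intro conjI allI impI)
      fix i j assume "1 \<le> i \<and> Suc i < j \<and> j < n"
      then show "\<tau> (a @ [i, j] @ b) = \<tau> (a @ [j, i] @ b)" using rel[of i j] by auto
    qed (use rel[of _ 1] in auto)
  qed
  show "\<tau> (a @ b) = \<tau> (b @ a)" if "set a \<subseteq> {1..<n}" "set b \<subseteq> {1..<n}" for a b
    using tr that posw_range unfolding markov_trace_def by blast
  show "\<tau> [] = 1" using tr unfolding markov_trace_def by blast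
  show "\<tau> (x @ [m]) = (q - (1 + q) * \<eta>) * \<tau> x" if "1 \<le> m" "set x \<subseteq> {1..<m}" for m x
  proof -
    have "(q * \<tau> x - \<tau> (x @ [m])) / (1 + q) = \<eta> * \<tau> x"
      using tr that unfolding markov_trace_def by blast
    then show ?thesis using q by (simp add: field_simps)
  qed
qed

lemma Tr_qphi_hecke_on:
  assumes q: "q * q = q - 1"
  shows "hecke_on n q (\<lambda>w. Tr (qphi q n w))"
  unfolding hecke_on_def qphi_append
proof (intro allI impI conjI)
  fix a b i j
  show "Tr (qmult n (qphi q n a) (qmult n (qphi q n [i, Suc i, i]) (qphi q n b)))
      = Tr (qmult n (qphi q n a) (qmult n (qphi q n [Suc i, i, Suc i]) (qphi q n b)))"
    if "1 \<le> i \<and> Suc i < n" using that by (simp only: qphi_braid)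
  show "Tr (qmult n (qphi q n a) (qmult n (qphi q n [i, j]) (qphi q n b)))
      = Tr (qmult n (qphi q n a) (qmult n (qphi q n [j, i]) (qphi q n b)))"
    if "1 \<le> i \<and> Suc i < j \<and> j < n" using qphi_comm[of i j n q] that by auto
  show "Tr (qmult n (qphi q n a) (qmult n (qphi q n [i, i]) (qphi q n b)))
      = (q - 1) * Tr (qmult n (qphi q n a) (qmult n (qphi q n [i]) (qphi q n b)))
        + q * Tr (qmult n (qphi q n a) (qphi q n b))"
    if "1 \<le> i \<and> i < n"
    using that by (simp only: qphi_quad[OF q] qmult_qadd_left qmult_qadd_right qmult_qscale_left
        qmult_qscale_right Tr_qadd Tr_qscale qphi_Nil qmult_one_left[OF qsupported_qphi])
qed

lemma q6_sq: "q6 * q6 = q6 - 1"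
proof -
  have "2 * complex_of_real pi * \<i> / 6 = \<i> * complex_of_real (pi / 3)" by (simp add: field_simps)
  then have "q6 = cis (pi / 3)" unfolding q6_def by (simp add: cis_conv_exp)
  also have "\<dots> = Complex (1 / 2) (sqrt 3 / 2)" by (simp add: cis.code cos_60 sin_60)
  finally have q6: "q6 = Complex (1 / 2) (sqrt 3 / 2)" .
  show ?thesis unfolding q6 by (simp add: complex_eq_iff)
qed

lemma sixth_root_plus_one:
  fixes q :: complex
  assumes "q * q = q - 1"
  shows "1 + q \<noteq> 0"
proof
  assume "1 + q = 0"
  then have "q = -1" by (simp add: add_eq_0_iff)
  then show False using assms by simp
qed

lemma Tr_qf:
  assumes q: "q * q = q - 1" and m: "1 \<le> m" "m < n"
  shows "Tr (qf q n m) = 1 / 2"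
proof -
  have "Tr (qf q n m) = (q - qs q n m ({}, {})) / (1 + q)"
    by (simp add: qf_def Tr_def qscale_def qadd_def qone_def qbw_def)
  also have "\<dots> = ((1 + q) / 2) / (1 + q)"
    unfolding qs_identity_coeff[OF m] sixth_root_scalar[OF q] by (simp add: field_simps)
  also have "\<dots> = 1 / 2"
    using sixth_root_plus_one[OF q] by (metis divide_divide_eq_left' divide_self mult.commute)
  finally show ?thesis .
qed

theorem mainTheorem4:
  fixes n :: nat
  assumes "2 \<le> n"
  shows "(\<forall>\<tau>. markov_trace q6 (1/2) \<tau> \<longrightarrow>
            (\<forall>w. set w \<subseteq> {1..<n} \<longrightarrow> Tr (qphi q6 n w) = \<tau> w))
       \<and> Tr (qf q6 n (n - 1)) = 1/2
       \<and> (\<forall>b \<in> qsubalg n (n - 1).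
            Tr (qmult n (qf q6 n (n - 1)) b) = Tr (qf q6 n (n - 1)) * Tr b)"
proof (intro conjI allI impI ballI)
  fix \<tau> w assume tr: "markov_trace q6 (1/2) \<tau>" and w: "set w \<subseteq> {1..<n}"
  have factor: "q6 - (1 + q6) * (1/2) = -1 / (2 * q6)"
    unfolding sixth_root_scalar[OF q6_sq] by (simp add: field_simps)
  note \<tau> = markov_trace_restrict[OF tr sixth_root_plus_one[OF q6_sq], unfolded factor]
  have cyclic: "Tr (qphi q6 n (a @ b)) = Tr (qphi q6 n (b @ a))" for a b
    unfolding qphi_append by (rule Tr_comm)
  show "Tr (qphi q6 n w) = \<tau> w"
    by (rule markov_functional_unique[OF Tr_qphi_hecke_on[OF q6_sq] \<tau>(1) cyclic \<tau>(2) _ \<tau>(3)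
          Tr_qphi_markov \<tau>(4) w]) simp_all
next
  have m: "1 \<le> n - 1" "n - 1 < n" using assms by auto
  show trf: "Tr (qf q6 n (n - 1)) = 1/2" by (rule Tr_qf[OF q6_sq m])
  fix b assume "b \<in> qsubalg n (n - 1)"
  then show "Tr (qmult n (qf q6 n (n - 1)) b) = Tr (qf q6 n (n - 1)) * Tr b"
    using Tr_factor[OF at_index_qf below_qsubalg] by (simp add: Tr_def)
qed
end
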